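(* Let $X_1,\dots,X_n$ be independent and identically distributed random variables with a common continuous distribution. Let $T\subset\{1,\dots,n\}$, let $k\in\{1,\dots,|T|\}$, let $X_{(k);T}$ denote the $k$-th order statistic of $(X_i)_{i\in T}$, and let \[Y_1=g\big(X_{(k);T}\big)\] for a non-decreasing function $g$. For $j=2,\dots,M$ let $Y_j=f_j(X_1,\dots,X_n)$ for some entrywise non-decreasing function $f_j$. Then $(Y_1,\dots,Y_M)$ is PRDS with respect to $\{1\}$.
   Context: For vectors, $x\preceq y$ means $x_i\le y_i$ for all $i$; a function is non-decreasing if $x\preceq y$ implies $f(x)\le f(y)$. A set $D\subset\mathbb R^m$ is non-decreasing if $x\preceq y$, $x\in D$ imply $y\in D$. A random vector $Y\in\mathbb R^m$ is PRDS with respect to $T\subset\{1,\dots,m\}$ if $t\mapsto\Pr(Y\in D\mid Y_i=t)$ is non-decreasing for every non-decreasing set $D$ and every $i\in T$. *)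

theory Defs
  imports "HOL-Probability.Probability"
begin

text \<open>Vectors in R^m are modelled as extensional functions on the index set {1..m},
  i.e. elements of the space of the product measure PiM {1..m} (\<lambda>_. borel).\<close>

definition vec_space :: "nat \<Rightarrow> (nat \<Rightarrow> real) measure" where
  "vec_space m = PiM {1..m} (\<lambda>_. borel)"

definition vec_le :: "nat \<Rightarrow> (nat \<Rightarrow> real) \<Rightarrow> (nat \<Rightarrow> real) \<Rightarrow> bool" where
  "vec_le m x y \<longleftrightarrow> (\<forall>i\<in>{1..m}. x i \<le> y i)"

definition nondecr_fun :: "nat \<Rightarrow> ((nat \<Rightarrow> real) \<Rightarrow> real) \<Rightarrow> bool" where
  "nondecr_fun m f \<longleftrightarrow>
     (\<forall>x\<in>space (vec_space m). \<forall>y\<in>space (vec_space m). vec_le m x y \<longrightarrow> f x \<le> f y)"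

definition nondecr_set :: "nat \<Rightarrow> (nat \<Rightarrow> real) set \<Rightarrow> bool" where
  "nondecr_set m D \<longleftrightarrow>
     D \<subseteq> space (vec_space m) \<and>
     (\<forall>x\<in>D. \<forall>y\<in>space (vec_space m). vec_le m x y \<longrightarrow> y \<in> D)"

definition rvec :: "nat \<Rightarrow> (nat \<Rightarrow> 'a \<Rightarrow> real) \<Rightarrow> 'a \<Rightarrow> (nat \<Rightarrow> real)" where
  "rvec m Y \<omega> = (\<lambda>j\<in>{1..m}. Y j \<omega>)"

text \<open>k-th order statistic (k \<ge> 1, k-th smallest) of (x_i)_{i \<in> T}.\<close>
definition order_stat :: "nat set \<Rightarrow> nat \<Rightarrow> (nat \<Rightarrow> real) \<Rightarrow> real" where
  "order_stat T k x = sort (map x (sorted_list_of_set T)) ! (k - 1)"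

text \<open>PRDS of (Y_1,...,Y_m) w.r.t. S: for every i \<in> S and every (Borel) non-decreasing
  set D, the conditional probability Pr(Y \<in> D | Y_i = t) has a version that is a
  non-decreasing function of t, i.e. there is a non-decreasing h with
  h(Y_i) = E[1_{Y \<in> D} | \<sigma>(Y_i)] almost surely.\<close>
definition PRDS :: "'a measure \<Rightarrow> nat \<Rightarrow> (nat \<Rightarrow> 'a \<Rightarrow> real) \<Rightarrow> nat set \<Rightarrow> bool" where
  "PRDS M m Y S \<longleftrightarrow>
     (\<forall>i\<in>S. \<forall>D\<in>sets (vec_space m). nondecr_set m D \<longrightarrow>
        (\<exists>h :: real \<Rightarrow> real. mono h \<and>
           (AE \<omega> in M. h (Y i \<omega>) =
              real_cond_exp M (vimage_algebra (space M) (Y i) borel)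
                 (indicator {\<omega>\<in>space M. rvec m Y \<omega> \<in> D}) \<omega>)))"

end

theory Submission
  imports Defs
begin

(* For a nondecreasing set D the event [Y in D] is [F(X) in D] for a coordinatewise nondecreasing map
   F whose first coordinate is g(Z), Z the k-th order statistic of (X_i) for i in T.  So it suffices
   that for every nondecreasing Phi with values in [0,1] the conditional expectation of Phi(X) given
   g(Z) is a nondecreasing function of g(Z).  Since X is i.i.d. with atomless law mu, ties are null,
   and splitting according to the index j with X_j = Z and the set S of indices of T below it shows
   that B |-> E[Phi(X); Z in B] has a mu-density Psi_Phi: a sum over (j, S) of integrals of
   Phi(x(j := t)) over boxes whose i-th side is (-inf, t) for i in S and (t, inf) for the other
   indices of T.  Raising t moves every side up, which increases monotone averages one coordinate at
   a time; hence Psi_Phi t * Psi_1 t' <= Psi_Phi t' * Psi_1 t for t <= t', and E[Phi(X) | Z] = r(Z)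
   with r = Psi_Phi / Psi_1 nondecreasing.  Conditioning r(Z) further on g(Z) keeps monotonicity: on
   the atoms of g(Z) one averages r over a level set of g, off the atoms g is a.s. injective. *)

section \<open>Order statistics\<close>

lemma sorted_nth_iff_length_filter:
  fixes ys :: "'a::linorder list"
  assumes "sorted ys" "1 \<le> k" "k \<le> length ys"
    and down: "\<And>a b. P b \<Longrightarrow> a \<le> b \<Longrightarrow> P a"
  shows "P (ys ! (k - 1)) \<longleftrightarrow> k \<le> length (filter P ys)"
proof
  assume Pk: "P (ys ! (k - 1))"
  have "{0..<k} \<subseteq> {i. i < length ys \<and> P (ys ! i)}"
  proof safe
    fix i assume "i \<in> {0..<k}"
    then show "i < length ys" "P (ys ! i)"
      using assms by (auto intro!: down[OF Pk] sorted_nth_mono)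
  qed
  from card_mono[OF _ this] show "k \<le> length (filter P ys)"
    by (simp add: length_filter_conv_card)
next
  assume k: "k \<le> length (filter P ys)"
  show "P (ys ! (k - 1))"
  proof (rule ccontr)
    assume nPk: "\<not> P (ys ! (k - 1))"
    have "{i. i < length ys \<and> P (ys ! i)} \<subseteq> {0..<k - 1}"
    proof safe
      fix i assume "i < length ys" "P (ys ! i)"
      then show "i \<in> {0..<k - 1}"
        using assms nPk by (metis atLeastLessThan_iff down le0 not_le sorted_nth_mono)
    qed
    from card_mono[OF _ this] show False
      using k assms(2) by (simp add: length_filter_conv_card)
  qed
qed

lemma order_stat_iff_card:
  assumes "finite T" "1 \<le> k" "k \<le> card T"
    and down: "\<And>a b. P b \<Longrightarrow> a \<le> b \<Longrightarrow> P a"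
  shows "P (order_stat T k x) \<longleftrightarrow> k \<le> card {i\<in>T. P (x i)}"
proof -
  let ?xs = "map x (sorted_list_of_set T)"
  have "length (filter P (sort ?xs)) = length (filter P ?xs)"
    by (metis mset_filter mset_sort size_mset)
  also have "\<dots> = card {i\<in>T. P (x i)}"
    using assms(1) by (simp add: filter_map comp_def distinct_length_filter Int_def conj_commute)
  finally show ?thesis
    unfolding order_stat_def using assms by (subst sorted_nth_iff_length_filter) auto
qed

lemma order_stat_le_iff:
  assumes "finite T" "1 \<le> k" "k \<le> card T"
  shows "order_stat T k x \<le> c \<longleftrightarrow> k \<le> card {i\<in>T. x i \<le> c}"
  using assms by (rule order_stat_iff_card) auto

lemma order_stat_less_iff:
  assumes "finite T" "1 \<le> k" "k \<le> card T"
  shows "order_stat T k x < c \<longleftrightarrow> k \<le> card {i\<in>T. x i < c}"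
  using assms by (rule order_stat_iff_card) auto

lemma order_stat_cong:
  assumes "\<And>i. i \<in> T \<Longrightarrow> x i = y i"
  shows "order_stat T k x = order_stat T k y"
proof -
  have eq: "map x (sorted_list_of_set T) = map y (sorted_list_of_set T)"
    using assms by (cases "finite T") auto
  show ?thesis
    by (simp only: order_stat_def eq)
qed

lemma order_stat_mono:
  assumes "finite T" "1 \<le> k" "k \<le> card T" "\<And>i. i \<in> T \<Longrightarrow> x i \<le> y i"
  shows "order_stat T k x \<le> order_stat T k y"
proof -
  have "k \<le> card {i\<in>T. y i \<le> order_stat T k y}"
    using order_stat_le_iff[OF assms(1-3)] by blast
  also have "\<dots> \<le> card {i\<in>T. x i \<le> order_stat T k y}"
    using assms by (intro card_mono) force+
  finally show ?thesis
    using order_stat_le_iff[OF assms(1-3)] by blast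
qed

lemma order_stat_in_image:
  assumes "finite T" "1 \<le> k" "k \<le> card T"
  shows "order_stat T k x \<in> x ` T"
proof -
  have "order_stat T k x \<in> set (sort (map x (sorted_list_of_set T)))"
    unfolding order_stat_def using assms by (intro nth_mem) auto
  then show ?thesis
    using assms(1) by simp
qed

lemma order_stat_eq_iff_card_less:
  assumes "finite T" "1 \<le> k" "k \<le> card T" "inj_on x T" "j \<in> T"
  shows "order_stat T k x = x j \<longleftrightarrow> card {i\<in>T. x i < x j} = k - 1"
proof -
  have "{i\<in>T. x i \<le> x j} = insert j {i\<in>T. x i < x j}"
    using assms(4,5) by (auto simp: inj_on_eq_iff order.order_iff_strict)
  then have "card {i\<in>T. x i \<le> x j} = card {i\<in>T. x i < x j} + 1"
    using assms(1) by simp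
  then show ?thesis
    using order_stat_le_iff[OF assms(1-3), of x "x j"] order_stat_less_iff[OF assms(1-3), of x "x j"]
      assms(2) by auto
qed

lemma borel_measurable_order_stat[measurable]:
  assumes "finite T" "1 \<le> k" "k \<le> card T"
    and [measurable]: "\<And>i. i \<in> T \<Longrightarrow> (\<lambda>\<omega>. F \<omega> i) \<in> borel_measurable N"
  shows "(\<lambda>\<omega>. order_stat T k (F \<omega>)) \<in> borel_measurable N"
proof (rule borel_measurableI_le)
  fix c
  have "(\<Sum>i\<in>T. indicator {..c} (F \<omega> i) :: real) = card {i\<in>T. F \<omega> i \<le> c}" for \<omega>
    using assms(1) by (simp add: indicator_def sum.If_cases Int_def conj_commute)
  then have "{\<omega> \<in> space N. order_stat T k (F \<omega>) \<le> c}
      = {\<omega> \<in> space N. real k \<le> (\<Sum>i\<in>T. indicator {..c} (F \<omega> i))}"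
    using order_stat_le_iff[OF assms(1-3)] by auto
  also have "\<dots> \<in> sets N"
    using assms(1) by measurable
  finally show "{\<omega> \<in> space N. order_stat T k (F \<omega>) \<le> c} \<in> sets N" .
qed

definition below_sets :: "nat set \<Rightarrow> nat \<Rightarrow> nat \<Rightarrow> nat set set" where
  "below_sets T k j = {S. S \<subseteq> T - {j} \<and> card S = k - 1}"

definition rank_event :: "nat set \<Rightarrow> nat \<Rightarrow> nat set \<Rightarrow> (nat \<Rightarrow> real) set" where
  "rank_event T j S = {x. (\<forall>i\<in>S. x i < x j) \<and> (\<forall>i\<in>T - {j} - S. x j < x i)}"

lemma finite_below_sets: "finite T \<Longrightarrow> finite (below_sets T k j)"
  unfolding below_sets_def by (rule finite_subset[of _ "Pow T"]) auto

lemma rank_event_iff: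
  assumes "inj_on x T" "j \<in> T" "S \<subseteq> T - {j}"
  shows "x \<in> rank_event T j S \<longleftrightarrow> S = {i\<in>T. x i < x j}"
proof
  assume x: "x \<in> rank_event T j S"
  show "S = {i\<in>T. x i < x j}"
  proof safe
    fix i assume i: "i \<in> T" "x i < x j"
    show "i \<in> S"
    proof (rule ccontr)
      assume "i \<notin> S"
      with i have "i \<in> T - {j} - S"
        by auto
      with x have "x j < x i"
        unfolding rank_event_def by blast
      with i(2) show False
        by simp
    qed
  qed (use assms x in \<open>auto simp: rank_event_def\<close>)
next
  assume "S = {i\<in>T. x i < x j}"
  then show "x \<in> rank_event T j S"
    using assms by (auto simp: rank_event_def inj_on_eq_iff neq_iff)
qed

lemma sum_indicator_rank_event:
  assumes "finite T" "1 \<le> k" "k \<le> card T" "inj_on x T" "j \<in> T"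
  shows "(\<Sum>S\<in>below_sets T k j. indicator (rank_event T j S) x :: 'b::{comm_monoid_add,zero_neq_one}) =
    (if order_stat T k x = x j then 1 else 0)"
proof -
  let ?L = "{i\<in>T. x i < x j}"
  have "(\<Sum>S\<in>below_sets T k j. indicator (rank_event T j S) x :: 'b) =
      (\<Sum>S\<in>below_sets T k j. if S = ?L then 1 else 0)"
    using assms(4,5) by (intro sum.cong refl) (auto simp: below_sets_def rank_event_iff)
  also have "\<dots> = (if ?L \<in> below_sets T k j then 1 else 0)"
    using assms(1) by (simp add: finite_below_sets)
  also have "?L \<in> below_sets T k j \<longleftrightarrow> order_stat T k x = x j"
    using order_stat_eq_iff_card_less[OF assms] by (auto simp: below_sets_def)
  finally show ?thesis .
qed

lemma order_stat_sum_rank_events: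
  fixes F :: "real \<Rightarrow> 'b::comm_semiring_1"
  assumes "finite T" "1 \<le> k" "k \<le> card T" "inj_on x T"
  shows "F (order_stat T k x) =
    (\<Sum>j\<in>T. \<Sum>S\<in>below_sets T k j. F (x j) * indicator (rank_event T j S) x)"
proof -
  obtain j0 where j0: "j0 \<in> T" "order_stat T k x = x j0"
    using order_stat_in_image[OF assms(1-3)] by blast
  have "(\<Sum>j\<in>T. \<Sum>S\<in>below_sets T k j. F (x j) * indicator (rank_event T j S) x) =
      (\<Sum>j\<in>T. if j = j0 then F (x j) else 0)"
    using j0 assms(4) by (intro sum.cong refl)
      (auto simp: sum_distrib_left[symmetric] sum_indicator_rank_event[OF assms] inj_on_eq_iff)
  also have "\<dots> = F (order_stat T k x)"
    using j0 assms(1) by simp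
  finally show ?thesis ..
qed

lemma pred_rank_event[measurable]:
  assumes "T \<subseteq> J" "j \<in> J" "S \<subseteq> J"
  shows "Measurable.pred (PiM J (\<lambda>_. borel)) (\<lambda>x. x \<in> rank_event T j S)"
  unfolding rank_event_def mem_Collect_eq
  using assms by (intro pred_intros_logic pred_intros_countable_bounded) auto

section \<open>Monotone averages over windows and boxes\<close>

(* The mu-average of every nondecreasing function over A is at most its average over B, written
   with cross-multiplied masses so that null sets need no separate treatment. *)
definition cond_stoch_le :: "real measure \<Rightarrow> real set \<Rightarrow> real set \<Rightarrow> bool" where
  "cond_stoch_le \<mu> A B \<longleftrightarrow>
     (\<forall>v \<in> borel_measurable borel. mono v \<longrightarrow>
        (\<integral>\<^sup>+y\<in>A. v y \<partial>\<mu>) * emeasure \<mu> B \<le> (\<integral>\<^sup>+y\<in>B. v y \<partial>\<mu>) * emeasure \<mu> A)"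

lemma cond_stoch_le_refl: "cond_stoch_le \<mu> A A"
  unfolding cond_stoch_le_def by simp

lemma cond_stoch_le_separated:
  assumes sets: "sets \<mu> = sets borel" "A \<in> sets borel" "B \<in> sets borel"
    and below: "\<And>a b. a \<in> A \<Longrightarrow> b \<in> B \<Longrightarrow> a \<le> b"
  shows "cond_stoch_le \<mu> A B"
  unfolding cond_stoch_le_def
proof (intro ballI impI)
  fix v :: "real \<Rightarrow> ennreal" assume "mono v"
  show "(\<integral>\<^sup>+y\<in>A. v y \<partial>\<mu>) * emeasure \<mu> B \<le> (\<integral>\<^sup>+y\<in>B. v y \<partial>\<mu>) * emeasure \<mu> A"
  proof (cases "A = {} \<or> B = {}")
    case False
    then obtain b0 where "b0 \<in> B"
      by blast
    then have "bdd_above A"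
      using below by (intro bdd_aboveI[of _ b0]) auto
    define c where "c = Sup A"
    have A_le: "a \<le> c" if "a \<in> A" for a
      unfolding c_def using \<open>bdd_above A\<close> that by (rule cSup_upper[rotated])
    have le_B: "c \<le> b" if "b \<in> B" for b
      unfolding c_def using False below that by (intro cSup_least) auto
    have "(\<integral>\<^sup>+y\<in>A. v y \<partial>\<mu>) \<le> (\<integral>\<^sup>+y. v c * indicator A y \<partial>\<mu>)"
      using A_le \<open>mono v\<close> by (intro nn_integral_mono) (auto simp: indicator_def mono_def)
    also have "\<dots> = v c * emeasure \<mu> A"
      using sets by (simp add: nn_integral_cmult_indicator)
    finally have "(\<integral>\<^sup>+y\<in>A. v y \<partial>\<mu>) * emeasure \<mu> B \<le> v c * emeasure \<mu> B * emeasure \<mu> A"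
      by (metis mult.assoc mult.commute mult_right_mono zero_le)
    also have "v c * emeasure \<mu> B = (\<integral>\<^sup>+y. v c * indicator B y \<partial>\<mu>)"
      using sets by (simp add: nn_integral_cmult_indicator)
    also have "\<dots> \<le> (\<integral>\<^sup>+y\<in>B. v y \<partial>\<mu>)"
      using le_B \<open>mono v\<close> by (intro nn_integral_mono) (auto simp: indicator_def mono_def)
    finally show ?thesis
      by (simp add: mult_right_mono)
  qed (auto simp: indicator_def)
qed

lemma
  fixes \<mu> :: "real measure"
  assumes sets: "sets \<mu> = sets borel" "A \<in> sets borel" "B \<in> sets borel"
    and below: "\<And>a b. a \<in> A \<Longrightarrow> b \<in> B \<Longrightarrow> a \<le> b" and disj: "A \<inter> B = {}"
  shows cond_stoch_le_Un_left: "cond_stoch_le \<mu> A (A \<union> B)"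
    and cond_stoch_le_Un_right: "cond_stoch_le \<mu> (A \<union> B) B"
proof -
  have sep: "(\<integral>\<^sup>+y\<in>A. v y \<partial>\<mu>) * emeasure \<mu> B \<le> (\<integral>\<^sup>+y\<in>B. v y \<partial>\<mu>) * emeasure \<mu> A"
    if "v \<in> borel_measurable borel" "mono v" for v
    using cond_stoch_le_separated[OF assms(1-4)] that by (auto simp: cond_stoch_le_def)
  have Un: "(\<integral>\<^sup>+y\<in>A \<union> B. v y \<partial>\<mu>) = (\<integral>\<^sup>+y\<in>A. v y \<partial>\<mu>) + (\<integral>\<^sup>+y\<in>B. v y \<partial>\<mu>)"
    if "v \<in> borel_measurable borel" for v
    using sets that disj
    by (intro nn_integral_disjoint_pair) (simp_all add: measurable_cong_sets[OF sets(1) refl])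
  have emeasure_Un: "emeasure \<mu> (A \<union> B) = emeasure \<mu> A + emeasure \<mu> B"
    using sets disj by (simp add: plus_emeasure)
  show "cond_stoch_le \<mu> A (A \<union> B)"
    unfolding cond_stoch_le_def
  proof (intro ballI impI)
    fix v :: "real \<Rightarrow> ennreal" assume v: "v \<in> borel_measurable borel" "mono v"
    have "(\<integral>\<^sup>+y\<in>A. v y \<partial>\<mu>) * emeasure \<mu> (A \<union> B) =
        (\<integral>\<^sup>+y\<in>A. v y \<partial>\<mu>) * emeasure \<mu> A + (\<integral>\<^sup>+y\<in>A. v y \<partial>\<mu>) * emeasure \<mu> B"
      by (simp only: emeasure_Un distrib_left)
    also have "\<dots> \<le> (\<integral>\<^sup>+y\<in>A. v y \<partial>\<mu>) * emeasure \<mu> A + (\<integral>\<^sup>+y\<in>B. v y \<partial>\<mu>) * emeasure \<mu> A"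
      using sep[OF v] by (rule add_left_mono)
    also have "\<dots> = (\<integral>\<^sup>+y\<in>A \<union> B. v y \<partial>\<mu>) * emeasure \<mu> A"
      by (simp only: Un[OF v(1)] distrib_right)
    finally show "(\<integral>\<^sup>+y\<in>A. v y \<partial>\<mu>) * emeasure \<mu> (A \<union> B) \<le> (\<integral>\<^sup>+y\<in>A \<union> B. v y \<partial>\<mu>) * emeasure \<mu> A" .
  qed
  show "cond_stoch_le \<mu> (A \<union> B) B"
    unfolding cond_stoch_le_def
  proof (intro ballI impI)
    fix v :: "real \<Rightarrow> ennreal" assume v: "v \<in> borel_measurable borel" "mono v"
    have "(\<integral>\<^sup>+y\<in>A \<union> B. v y \<partial>\<mu>) * emeasure \<mu> B =
        (\<integral>\<^sup>+y\<in>A. v y \<partial>\<mu>) * emeasure \<mu> B + (\<integral>\<^sup>+y\<in>B. v y \<partial>\<mu>) * emeasure \<mu> B"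
      by (simp only: Un[OF v(1)] distrib_right)
    also have "\<dots> \<le> (\<integral>\<^sup>+y\<in>B. v y \<partial>\<mu>) * emeasure \<mu> A + (\<integral>\<^sup>+y\<in>B. v y \<partial>\<mu>) * emeasure \<mu> B"
      using sep[OF v] by (rule add_right_mono)
    also have "\<dots> = (\<integral>\<^sup>+y\<in>B. v y \<partial>\<mu>) * emeasure \<mu> (A \<union> B)"
      by (simp only: emeasure_Un distrib_left)
    finally show "(\<integral>\<^sup>+y\<in>A \<union> B. v y \<partial>\<mu>) * emeasure \<mu> B \<le> (\<integral>\<^sup>+y\<in>B. v y \<partial>\<mu>) * emeasure \<mu> (A \<union> B)" .
  qed
qed

lemma set_nn_integral_PiE_insert:
  fixes \<mu> :: "'a measure"
  assumes "sigma_finite_measure \<mu>" "finite J" "i \<notin> J"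
    and C: "\<And>l. l \<in> insert i J \<Longrightarrow> C l \<in> sets \<mu>"
    and u[measurable]: "u \<in> borel_measurable (PiM (insert i J) (\<lambda>_. \<mu>))"
  shows "(\<integral>\<^sup>+x\<in>PiE (insert i J) C. u x \<partial>PiM (insert i J) (\<lambda>_. \<mu>)) =
    (\<integral>\<^sup>+x\<in>PiE J C. (\<integral>\<^sup>+y\<in>C i. u (x(i := y)) \<partial>\<mu>) \<partial>PiM J (\<lambda>_. \<mu>))"
proof -
  interpret product_sigma_finite "\<lambda>_. \<mu>"
    using assms(1) by (simp add: product_sigma_finite_def)
  have [measurable]: "PiE (insert i J) C \<in> sets (PiM (insert i J) (\<lambda>_. \<mu>))"
    using assms(2) C by (intro sets_PiM_I_finite) auto
  have "(\<integral>\<^sup>+x\<in>PiE (insert i J) C. u x \<partial>PiM (insert i J) (\<lambda>_. \<mu>)) =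
      (\<integral>\<^sup>+x. (\<integral>\<^sup>+y. u (x(i := y)) * indicator (PiE (insert i J) C) (x(i := y)) \<partial>\<mu>) \<partial>PiM J (\<lambda>_. \<mu>))"
    using assms(2,3) by (subst product_nn_integral_insert) auto
  also have "\<dots> = (\<integral>\<^sup>+x. (\<integral>\<^sup>+y\<in>C i. u (x(i := y)) \<partial>\<mu>) * indicator (PiE J C) x \<partial>PiM J (\<lambda>_. \<mu>))"
  proof (intro nn_integral_cong)
    fix x assume "x \<in> space (PiM J (\<lambda>_. \<mu>))"
    then have "indicator (PiE (insert i J) C) (x(i := y)) =
        (indicator (C i) y * indicator (PiE J C) x :: ennreal)" for y
      using assms(3) by (auto simp: indicator_def space_PiM PiE_def Pi_def extensional_def)
    moreover have "(\<lambda>y. u (x(i := y)) * indicator (C i) y) \<in> borel_measurable \<mu>"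
      using measurable_component_update[OF \<open>x \<in> _\<close> assms(3)] u C by measurable
    ultimately show "(\<integral>\<^sup>+y. u (x(i := y)) * indicator (PiE (insert i J) C) (x(i := y)) \<partial>\<mu>) =
        (\<integral>\<^sup>+y\<in>C i. u (x(i := y)) \<partial>\<mu>) * indicator (PiE J C) x"
      by (simp add: mult.assoc nn_integral_multc[symmetric])
  qed
  finally show ?thesis .
qed

lemma mono_on_extensional_upd:
  assumes "mono_on (extensional (insert i J)) u"
    and "x \<in> extensional J" "x' \<in> extensional J" "x \<le> x'" "y \<le> y'"
  shows "u (x(i := y)) \<le> u (x'(i := y'))"
proof (rule mono_onD[OF assms(1)])
  show "x(i := y) \<in> extensional (insert i J)" "x'(i := y') \<in> extensional (insert i J)"
    using assms(2,3) by (auto simp: extensional_def)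
  show "x(i := y) \<le> x'(i := y')"
    using assms(4,5) by (simp add: le_fun_def)
qed

lemma borel_measurable_set_nn_integral_upd:
  assumes "sigma_finite_measure \<mu>" "u \<in> borel_measurable (PiM (insert i J) (\<lambda>_. \<mu>))"
    and [measurable]: "C \<in> sets \<mu>"
  shows "(\<lambda>x. \<integral>\<^sup>+y\<in>C. u (x(i := y)) \<partial>\<mu>) \<in> borel_measurable (PiM J (\<lambda>_. \<mu>))"
proof -
  have [measurable]: "(\<lambda>p. u ((fst p)(i := snd p))) \<in> borel_measurable (PiM J (\<lambda>_. \<mu>) \<Otimes>\<^sub>M \<mu>)"
    using measurable_comp[OF measurable_add_dim assms(2)] by (simp add: comp_def case_prod_beta')
  show ?thesis
    by (intro sigma_finite_measure.borel_measurable_nn_integral assms(1)) measurable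
qed

lemma PiM_cond_stoch_le:
  fixes \<mu> :: "real measure" and u :: "(nat \<Rightarrow> real) \<Rightarrow> ennreal"
  assumes "sigma_finite_measure \<mu>" and sets_eq[measurable_cong]: "sets \<mu> = sets borel"
    and "finite J"
    and sets: "\<And>i. i \<in> J \<Longrightarrow> A i \<in> sets borel" "\<And>i. i \<in> J \<Longrightarrow> B i \<in> sets borel"
    and le: "\<And>i. i \<in> J \<Longrightarrow> cond_stoch_le \<mu> (A i) (B i)"
    and "u \<in> borel_measurable (PiM J (\<lambda>_. \<mu>))" "mono_on (extensional J) u"
  shows "(\<integral>\<^sup>+x\<in>PiE J A. u x \<partial>PiM J (\<lambda>_. \<mu>)) * emeasure (PiM J (\<lambda>_. \<mu>)) (PiE J B)
       \<le> (\<integral>\<^sup>+x\<in>PiE J B. u x \<partial>PiM J (\<lambda>_. \<mu>)) * emeasure (PiM J (\<lambda>_. \<mu>)) (PiE J A)"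
  using assms(3-)
proof (induction J arbitrary: u rule: finite_induct)
  case (insert i J)
  interpret product_sigma_finite "\<lambda>_. \<mu>"
    using assms(1) by (simp add: product_sigma_finite_def)
  note u[measurable] = insert.prems(4)
  define v where "v C x = (\<integral>\<^sup>+y\<in>C. u (x(i := y)) \<partial>\<mu>)" for C x
  have v_meas: "v C \<in> borel_measurable (PiM J (\<lambda>_. \<mu>))" if "C \<in> sets borel" for C
    unfolding v_def by (rule borel_measurable_set_nn_integral_upd[OF assms(1) u]) (simp add: sets_eq that)
  have v_mono: "mono_on (extensional J) (v C)" for C
    unfolding v_def
    by (intro mono_onI nn_integral_mono mult_right_mono mono_on_extensional_upd[OF insert.prems(5)]) auto
  have v_ratio: "v (A i) x * emeasure \<mu> (B i) \<le> v (B i) x * emeasure \<mu> (A i)"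
    if "x \<in> space (PiM J (\<lambda>_. \<mu>))" for x
  proof -
    have "(\<lambda>y. u (x(i := y))) \<in> borel_measurable borel"
      using measurable_component_update[OF that insert.hyps(2)] u
      by (simp add: measurable_cong_sets[OF sets_eq[symmetric] refl])
    moreover have "mono (\<lambda>y. u (x(i := y)))"
      using that by (intro monoI mono_on_extensional_upd[OF insert.prems(5)]) (auto simp: space_PiM PiE_def)
    ultimately show ?thesis
      using insert.prems(3) unfolding v_def cond_stoch_le_def by blast
  qed
  have integral_insert: "(\<integral>\<^sup>+x\<in>PiE (insert i J) C. u x \<partial>PiM (insert i J) (\<lambda>_. \<mu>)) =
      (\<integral>\<^sup>+x\<in>PiE J C. v (C i) x \<partial>PiM J (\<lambda>_. \<mu>))" if "\<And>l. l \<in> insert i J \<Longrightarrow> C l \<in> sets borel" for C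
    unfolding v_def using that insert.hyps
    by (intro set_nn_integral_PiE_insert assms(1)) (auto simp: sets_eq)
  have emeasure_insert: "emeasure (PiM (insert i J) (\<lambda>_. \<mu>)) (PiE (insert i J) C) =
      emeasure \<mu> (C i) * emeasure (PiM J (\<lambda>_. \<mu>)) (PiE J C)" if "\<And>l. l \<in> insert i J \<Longrightarrow> C l \<in> sets borel" for C
    using that insert.hyps by (subst (1 2) emeasure_PiM) (auto simp: sets_eq)
  have sets_A: "A l \<in> sets borel" "B l \<in> sets borel" if "l \<in> insert i J" for l
    using insert.prems(1,2) that by auto
  have [measurable]: "PiE J A \<in> sets (PiM J (\<lambda>_. \<mu>))"
    using insert.hyps sets_A by (intro sets_PiM_I_finite) (auto simp: sets_eq)
  have multc: "(\<integral>\<^sup>+x\<in>PiE J A. f x \<partial>PiM J (\<lambda>_. \<mu>)) * c = (\<integral>\<^sup>+x\<in>PiE J A. f x * c \<partial>PiM J (\<lambda>_. \<mu>))"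
    if [measurable]: "f \<in> borel_measurable (PiM J (\<lambda>_. \<mu>))" for f c
    by (subst nn_integral_multc[symmetric]) (auto simp: mult_ac)
  \<comment> \<open>Integrate out coordinate i first: the inner integrals compare by the hypothesis on i,
    the outer ones by induction.\<close>
  let ?vA = "v (A i)" and ?vB = "v (B i)" and ?mJ = "\<lambda>C. emeasure (PiM J (\<lambda>_. \<mu>)) (PiE J C)"
  have "(\<integral>\<^sup>+x\<in>PiE J A. ?vA x \<partial>PiM J (\<lambda>_. \<mu>)) * (emeasure \<mu> (B i) * ?mJ B) =
      (\<integral>\<^sup>+x\<in>PiE J A. ?vA x * emeasure \<mu> (B i) \<partial>PiM J (\<lambda>_. \<mu>)) * ?mJ B"
    using sets_A by (simp add: multc v_meas mult.assoc[symmetric])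
  also have "\<dots> \<le> (\<integral>\<^sup>+x\<in>PiE J A. ?vB x * emeasure \<mu> (A i) \<partial>PiM J (\<lambda>_. \<mu>)) * ?mJ B"
    by (intro mult_right_mono nn_integral_mono) (simp_all add: mult_right_mono v_ratio)
  also have "\<dots> = emeasure \<mu> (A i) * ((\<integral>\<^sup>+x\<in>PiE J A. ?vB x \<partial>PiM J (\<lambda>_. \<mu>)) * ?mJ B)"
    using sets_A by (subst multc[symmetric]) (simp_all add: v_meas mult_ac)
  also have "\<dots> \<le> emeasure \<mu> (A i) * ((\<integral>\<^sup>+x\<in>PiE J B. ?vB x \<partial>PiM J (\<lambda>_. \<mu>)) * ?mJ A)"
    using insert.prems(1-3) sets_A
    by (intro mult_left_mono insert.IH[OF _ _ _ v_meas v_mono]) auto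
  also have "\<dots> = (\<integral>\<^sup>+x\<in>PiE J B. ?vB x \<partial>PiM J (\<lambda>_. \<mu>)) * (emeasure \<mu> (A i) * ?mJ A)"
    by (simp add: mult_ac)
  finally show ?case
    by (simp only: integral_insert[OF sets_A(1)] integral_insert[OF sets_A(2)]
        emeasure_insert[OF sets_A(1)] emeasure_insert[OF sets_A(2)])
qed simp

section \<open>Monotone versions of conditional expectations\<close>

lemma mono_ratio_factor:
  fixes a b :: "real \<Rightarrow> ennreal"
  assumes le: "\<And>t. a t \<le> b t" and finite: "\<And>t. b t < \<top>"
    and ratio: "\<And>t t'. t \<le> t' \<Longrightarrow> a t * b t' \<le> a t' * b t"
  shows "\<exists>r. mono r \<and> (\<forall>t. 0 \<le> r t \<and> r t \<le> 1) \<and> (\<forall>t. a t = ennreal (r t) * b t)"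
proof -
  define q where "q t = enn2real (a t) / enn2real (b t)" for t
  have a_real: "a t = ennreal (enn2real (a t))" and b_real: "b t = ennreal (enn2real (b t))" for t
    using le[of t] finite[of t] by (auto simp: ennreal_enn2real_if top_unique)
  have ab_real: "enn2real (a t) \<le> enn2real (b t)" for t
    using le[of t] finite[of t] by (intro enn2real_mono) auto
  have b_pos: "0 < enn2real (b t)" if "b t \<noteq> 0" for t
    using that b_real[of t] by (metis ennreal_0 enn2real_nonneg order_le_less)
  have q01: "0 \<le> q t \<and> q t \<le> 1" for t
    using ab_real[of t] enn2real_nonneg[of "b t"]
    by (cases "enn2real (b t) = 0") (simp_all add: q_def divide_le_eq_1 less_le)
  have q_mono: "q t \<le> q t'" if "t \<le> t'" "b t \<noteq> 0" "b t' \<noteq> 0" for t t'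
  proof -
    have "ennreal (enn2real (a t) * enn2real (b t')) \<le> ennreal (enn2real (a t') * enn2real (b t))"
      using ratio[OF that(1)] by (subst (1 2) ennreal_mult) (simp_all flip: a_real b_real)
    then have "enn2real (a t) * enn2real (b t') \<le> enn2real (a t') * enn2real (b t)"
      by (simp add: ennreal_le_iff)
    then show ?thesis
      unfolding q_def using b_pos[OF that(2)] b_pos[OF that(3)] by (simp add: divide_simps mult.commute)
  qed
  \<comment> \<open>The ratio q is meaningless where b vanishes; its running supremum is monotone everywhere
    and agrees with q elsewhere.\<close>
  define r where "r t = Sup (insert 0 {q s |s. s \<le> t \<and> b s \<noteq> 0})" for t
  have bdd: "bdd_above (insert 0 {q s |s. s \<le> t \<and> b s \<noteq> 0})" for t
    using q01 by (intro bdd_aboveI[of _ 1]) auto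
  have "mono r"
    unfolding r_def by (intro monoI cSup_subset_mono bdd) auto
  moreover have "0 \<le> r t \<and> r t \<le> 1" for t
    unfolding r_def using q01 by (auto intro!: cSup_upper bdd cSup_least)
  moreover have "a t = ennreal (r t) * b t" for t
  proof (cases "b t = 0")
    case False
    have "r t = q t"
      unfolding r_def using False q01 q_mono by (intro cSup_eq_maximum) auto
    then have "ennreal (r t) * b t = ennreal (q t * enn2real (b t))"
      using q01[of t] by (subst b_real) (simp add: ennreal_mult)
    also have "q t * enn2real (b t) = enn2real (a t)"
      unfolding q_def using b_pos[OF False] by simp
    finally show ?thesis
      using a_real by simp
  qed (use le[of t] in simp)
  ultimately show ?thesis
    by blast
qed

locale mono_coarsening =
  fixes \<rho> :: "real measure" and r g :: "real \<Rightarrow> real"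
  assumes finite_\<rho>: "finite_measure \<rho>" and sets_\<rho>[measurable_cong]: "sets \<rho> = sets borel"
    and mono_r: "mono r" and r_nonneg: "\<And>y. 0 \<le> r y" and r_le_1: "\<And>y. r y \<le> 1"
    and mono_g: "mono g"
begin

definition level :: "real \<Rightarrow> real set" where
  "level s = g -` {s}"

definition atoms :: "real set" where
  "atoms = {s. measure \<rho> (level s) \<noteq> 0}"

definition level_avg :: "real \<Rightarrow> real" where
  "level_avg s = enn2real (\<integral>\<^sup>+y\<in>level s. ennreal (r y) \<partial>\<rho>) / measure \<rho> (level s)"

definition sup_below :: "real \<Rightarrow> real" where
  "sup_below s = Sup (insert 0 (r ` {y. g y \<le> s}))"

(* h (g y) is a version of E[r(Y) | g(Y)] for Y with law rho: on an atom s of the law of g(Y) it is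
   the average of r over the level set, elsewhere level sets are null and sup_below keeps h monotone. *)
definition h :: "real \<Rightarrow> real" where
  "h s = (if s \<in> atoms then level_avg s else sup_below s)"

lemma g_measurable[measurable]: "g \<in> borel_measurable borel"
  using mono_g by (rule borel_measurable_mono)

lemma r_measurable[measurable]: "r \<in> borel_measurable borel"
  using mono_r by (rule borel_measurable_mono)

lemma level_measurable[measurable]: "level s \<in> sets borel"
  unfolding level_def by (rule measurable_sets_borel[OF g_measurable]) simp

lemma less_of_g_less: "g y < g y' \<Longrightarrow> y < y'"
  using mono_g by (metis mono_def not_less)

lemma countable_atoms: "countable atoms"
proof -
  interpret finite_measure \<rho>
    by (rule finite_\<rho>)
  have g_meas: "g \<in> borel_measurable \<rho>"
    by simp
  interpret image: finite_measure "distr \<rho> borel g"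
    using g_meas by (rule finite_measure_distr)
  have "measure (distr \<rho> borel g) {s} = measure \<rho> (level s)" for s
    using g_meas sets_eq_imp_space_eq[OF sets_\<rho>] by (subst measure_distr) (auto simp: level_def)
  then show ?thesis
    using image.countable_support unfolding atoms_def by simp
qed

lemma level_integral_real:
  "(\<integral>\<^sup>+y\<in>level s. ennreal (r y) \<partial>\<rho>) = ennreal (enn2real (\<integral>\<^sup>+y\<in>level s. ennreal (r y) \<partial>\<rho>))"
proof -
  interpret finite_measure \<rho>
    by (rule finite_\<rho>)
  have "(\<integral>\<^sup>+y\<in>level s. ennreal (r y) \<partial>\<rho>) \<le> emeasure \<rho> (level s)"
    using r_le_1 by (auto intro!: nn_integral_mono simp: indicator_def simp flip: nn_integral_indicator)
  also have "\<dots> < \<top>"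
    by (simp add: emeasure_eq_measure)
  finally show ?thesis
    by (simp add: ennreal_enn2real_if less_top[symmetric])
qed

lemma level_avg_bounds:
  assumes "s \<in> atoms" "0 \<le> c"
  shows "(\<And>y. y \<in> level s \<Longrightarrow> r y \<le> c) \<Longrightarrow> level_avg s \<le> c"
    and "(\<And>y. y \<in> level s \<Longrightarrow> c \<le> r y) \<Longrightarrow> c \<le> level_avg s"
proof -
  interpret finite_measure \<rho>
    by (rule finite_\<rho>)
  let ?J = "\<integral>\<^sup>+y\<in>level s. ennreal (r y) \<partial>\<rho>"
  have pos: "0 < measure \<rho> (level s)"
    using assms(1) by (simp add: atoms_def zero_less_measure_iff)
  have const: "(\<integral>\<^sup>+y\<in>level s. ennreal c \<partial>\<rho>) = ennreal (c * measure \<rho> (level s))"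
    using assms(2) by (simp add: nn_integral_cmult_indicator emeasure_eq_measure ennreal_mult)
  note J = level_integral_real[of s]
  show "level_avg s \<le> c" if "\<And>y. y \<in> level s \<Longrightarrow> r y \<le> c"
  proof -
    have "?J \<le> (\<integral>\<^sup>+y\<in>level s. ennreal c \<partial>\<rho>)"
      using that by (intro nn_integral_mono) (auto simp: indicator_def intro!: ennreal_leI)
    then have "enn2real ?J \<le> c * measure \<rho> (level s)"
      using assms(2) pos unfolding const by (subst (asm) J) (simp add: ennreal_le_iff)
    then show ?thesis
      unfolding level_avg_def using pos by (simp add: divide_le_eq)
  qed
  show "c \<le> level_avg s" if "\<And>y. y \<in> level s \<Longrightarrow> c \<le> r y"
  proof -
    have "(\<integral>\<^sup>+y\<in>level s. ennreal c \<partial>\<rho>) \<le> ?J"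
      using that by (intro nn_integral_mono) (auto simp: indicator_def intro!: ennreal_leI)
    then have "c * measure \<rho> (level s) \<le> enn2real ?J"
      unfolding const by (subst (asm) J) (simp add: ennreal_le_iff)
    then show ?thesis
      unfolding level_avg_def using pos by (simp add: le_divide_eq)
  qed
qed

lemma set_nn_integral_level:
  assumes "s \<in> atoms"
  shows "(\<integral>\<^sup>+y\<in>level s. ennreal (level_avg s) \<partial>\<rho>) = (\<integral>\<^sup>+y\<in>level s. ennreal (r y) \<partial>\<rho>)"
proof -
  interpret finite_measure \<rho>
    by (rule finite_\<rho>)
  let ?J = "\<integral>\<^sup>+y\<in>level s. ennreal (r y) \<partial>\<rho>"
  have pos: "0 < measure \<rho> (level s)"
    using assms by (simp add: atoms_def zero_less_measure_iff)
  note J = level_integral_real[of s]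
  have "0 \<le> level_avg s"
    using assms r_nonneg by (intro level_avg_bounds(2)) auto
  then have "(\<integral>\<^sup>+y\<in>level s. ennreal (level_avg s) \<partial>\<rho>) = ennreal (level_avg s * measure \<rho> (level s))"
    by (simp add: nn_integral_cmult_indicator emeasure_eq_measure ennreal_mult)
  also have "level_avg s * measure \<rho> (level s) = enn2real ?J"
    unfolding level_avg_def using pos by simp
  finally show ?thesis
    using J by simp
qed

lemma sup_below_upper: "g y \<le> s \<Longrightarrow> r y \<le> sup_below s"
  unfolding sup_below_def using r_le_1 by (intro cSup_upper bdd_aboveI[of _ 1]) auto

lemma sup_below_nonneg: "0 \<le> sup_below s"
  unfolding sup_below_def using r_le_1 by (intro cSup_upper bdd_aboveI[of _ 1]) auto

lemma sup_below_least: "0 \<le> c \<Longrightarrow> (\<And>y. g y \<le> s \<Longrightarrow> r y \<le> c) \<Longrightarrow> sup_below s \<le> c"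
  unfolding sup_below_def by (auto intro!: cSup_least)

lemma h_le:
  assumes "0 \<le> c" "\<And>y. g y \<le> s \<Longrightarrow> r y \<le> c"
  shows "h s \<le> c"
proof (cases "s \<in> atoms")
  case True
  then show ?thesis
    unfolding h_def using assms by (auto intro!: level_avg_bounds(1) simp: level_def)
next
  case False
  then show ?thesis
    unfolding h_def using assms by (simp add: sup_below_least)
qed

lemma h_nonneg: "0 \<le> h s"
  using level_avg_bounds(2)[of s 0] r_nonneg sup_below_nonneg by (simp add: h_def)

lemma h_le_1: "h s \<le> 1"
  using r_le_1 by (intro h_le) auto

lemma mono_h: "mono h"
proof (rule monoI)
  fix s s' :: real assume "s \<le> s'"
  show "h s \<le> h s'"
  proof (cases "s = s'")
    case False
    with \<open>s \<le> s'\<close> have "s < s'"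
      by simp
    show ?thesis
    proof (cases "s' \<in> atoms")
      case True
      have "h s \<le> level_avg s'"
      proof (intro level_avg_bounds(2)[OF True h_nonneg] h_le[OF r_nonneg])
        fix y' y assume "y' \<in> level s'" "g y \<le> s"
        with \<open>s < s'\<close> have "g y < g y'"
          by (simp add: level_def)
        then have "y < y'"
          by (rule less_of_g_less)
        then show "r y \<le> r y'"
          using mono_r by (simp add: mono_def)
      qed
      then show ?thesis
        using True by (simp add: h_def)
    next
      case False
      have "h s \<le> sup_below s'"
        using \<open>s < s'\<close> by (intro h_le sup_below_nonneg sup_below_upper) auto
      then show ?thesis
        using False by (simp add: h_def)
    qed
  qed simp
qed

lemma h_measurable[measurable]: "h \<in> borel_measurable borel"
  using mono_h by (rule borel_measurable_mono)

lemma vimage_g_measurable: "X \<in> sets borel \<Longrightarrow> g -` X \<in> sets \<rho>"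
  using measurable_sets_borel[OF g_measurable] by (simp add: sets_\<rho>)

lemma atoms_measurable: "atoms \<in> sets borel"
  using countable_atoms by (auto intro: sets.countable)

lemma h_eq_AE: "AE y in \<rho>. g y \<notin> atoms \<longrightarrow> h (g y) = r y"
proof -
  interpret finite_measure \<rho>
    by (rule finite_\<rho>)
  \<comment> \<open>Almost surely y avoids the null level sets through rational points; then, off the atoms,
    g y' \<le> g y forces y' \<le> y.\<close>
  have "AE y in \<rho>. \<forall>q\<in>\<rat>. g q \<notin> atoms \<longrightarrow> y \<notin> level (g q)"
  proof (subst AE_ball_countable[OF countable_rat], intro ballI AE_impI)
    fix q :: real assume "g q \<notin> atoms"
    then have "level (g q) \<in> null_sets \<rho>"
      by (auto simp: atoms_def null_sets_def emeasure_eq_measure)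
    then show "AE y in \<rho>. y \<notin> level (g q)"
      by (rule AE_not_in)
  qed
  then show ?thesis
  proof (rule AE_mp, intro AE_I2 impI)
    fix y assume good: "\<forall>q\<in>\<rat>. g q \<notin> atoms \<longrightarrow> y \<notin> level (g q)" and "g y \<notin> atoms"
    have "r y' \<le> r y" if "g y' \<le> g y" for y'
    proof (rule ccontr)
      assume "\<not> r y' \<le> r y"
      then have "y < y'"
        using mono_r by (metis mono_def not_le_imp_less order.order_iff_strict)
      then obtain q where q: "q \<in> \<rat>" "y < q" "q < y'"
        using Rats_dense_in_real by blast
      then have "g y \<le> g q" "g q \<le> g y'"
        using mono_g by (auto simp: mono_def)
      with that have "g q = g y"
        by simp
      with good q(1) \<open>g y \<notin> atoms\<close> show False
        by (auto simp: level_def)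
    qed
    then have "sup_below (g y) = r y"
      by (intro antisym sup_below_least sup_below_upper r_nonneg order.refl)
    then show "h (g y) = r y"
      using \<open>g y \<notin> atoms\<close> by (simp add: h_def)
  qed
qed

lemma set_nn_integral_atoms:
  assumes "B \<in> sets borel"
  shows "(\<integral>\<^sup>+y\<in>g -` (B \<inter> atoms). ennreal (h (g y)) \<partial>\<rho>) = (\<integral>\<^sup>+y\<in>g -` (B \<inter> atoms). ennreal (r y) \<partial>\<rho>)"
proof -
  have U: "g -` (B \<inter> atoms) = (\<Union>s\<in>B \<inter> atoms. level s)"
    by (auto simp: level_def)
  have countable: "countable (B \<inter> atoms)"
    using countable_atoms by (rule countable_subset[rotated]) auto
  have disjoint: "disjoint_family_on level (B \<inter> atoms)"
    by (auto simp: disjoint_family_on_def level_def)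
  have sum_levels: "(\<integral>\<^sup>+y\<in>g -` (B \<inter> atoms). f y \<partial>\<rho>) =
      (\<integral>\<^sup>+s. (\<integral>\<^sup>+y\<in>level s. f y \<partial>\<rho>) \<partial>count_space (B \<inter> atoms))"
    if "f \<in> borel_measurable \<rho>" for f
  proof -
    have "g -` (B \<inter> atoms) \<in> sets \<rho>"
      using assms atoms_measurable by (intro vimage_g_measurable) auto
    with that have "(\<integral>\<^sup>+y\<in>g -` (B \<inter> atoms). f y \<partial>\<rho>) = emeasure (density \<rho> f) (\<Union>s\<in>B \<inter> atoms. level s)"
      unfolding U by (rule emeasure_density[symmetric])
    also have "\<dots> = (\<integral>\<^sup>+s. emeasure (density \<rho> f) (level s) \<partial>count_space (B \<inter> atoms))"
      using countable disjoint by (intro emeasure_UN_countable) (simp_all add: sets_\<rho>)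
    finally show ?thesis
      using that by (simp add: emeasure_density sets_\<rho>)
  qed
  have "(\<integral>\<^sup>+y\<in>level s. ennreal (h (g y)) \<partial>\<rho>) = (\<integral>\<^sup>+y\<in>level s. ennreal (r y) \<partial>\<rho>)"
    if "s \<in> atoms" for s
  proof -
    have "(\<integral>\<^sup>+y\<in>level s. ennreal (h (g y)) \<partial>\<rho>) = (\<integral>\<^sup>+y\<in>level s. ennreal (level_avg s) \<partial>\<rho>)"
      using that by (intro nn_integral_cong) (simp add: indicator_def level_def h_def)
    then show ?thesis
      using that by (simp add: set_nn_integral_level)
  qed
  moreover have "(\<lambda>y. ennreal (h (g y))) \<in> borel_measurable \<rho>" "(\<lambda>y. ennreal (r y)) \<in> borel_measurable \<rho>"
    by measurable
  ultimately show ?thesis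
    by (simp only: sum_levels) (rule nn_integral_cong, simp)
qed

lemma set_nn_integral_h:
  assumes [measurable]: "B \<in> sets borel"
  shows "(\<integral>\<^sup>+y\<in>g -` B. ennreal (h (g y)) \<partial>\<rho>) = (\<integral>\<^sup>+y\<in>g -` B. ennreal (r y) \<partial>\<rho>)"
proof -
  have split: "(\<integral>\<^sup>+y\<in>g -` B. f y \<partial>\<rho>) =
      (\<integral>\<^sup>+y\<in>g -` (B \<inter> atoms). f y \<partial>\<rho>) + (\<integral>\<^sup>+y\<in>g -` (B - atoms). f y \<partial>\<rho>)"
    if [measurable]: "f \<in> borel_measurable borel" for f
  proof -
    have "g -` B = g -` (B \<inter> atoms) \<union> g -` (B - atoms)"
      by auto
    then show ?thesis
      using atoms_measurable
      by (simp only:) (intro nn_integral_disjoint_pair vimage_g_measurable; auto)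
  qed
  have "(\<integral>\<^sup>+y\<in>g -` (B - atoms). ennreal (h (g y)) \<partial>\<rho>) = (\<integral>\<^sup>+y\<in>g -` (B - atoms). ennreal (r y) \<partial>\<rho>)"
    using h_eq_AE by (intro nn_integral_cong_AE) (auto elim!: AE_mp simp: indicator_def)
  then show ?thesis
    using split[of "\<lambda>y. ennreal (h (g y))"] split[of "\<lambda>y. ennreal (r y)"] set_nn_integral_atoms[OF assms]
    by simp
qed

end

lemma (in prob_space) AE_real_cond_exp_vimage_eq:
  fixes V W :: "'a \<Rightarrow> real" and h :: "real \<Rightarrow> real"
  assumes [measurable]: "V \<in> borel_measurable M" "W \<in> borel_measurable M" "h \<in> borel_measurable borel"
    and W_bounds: "\<And>\<omega>. \<omega> \<in> space M \<Longrightarrow> 0 \<le> W \<omega> \<and> W \<omega> \<le> 1" and h_bounds: "\<And>s. 0 \<le> h s \<and> h s \<le> 1"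
    and eq: "\<And>B. B \<in> sets borel \<Longrightarrow>
      (\<integral>\<^sup>+\<omega>. ennreal (W \<omega>) * indicator B (V \<omega>) \<partial>M) = (\<integral>\<^sup>+\<omega>. ennreal (h (V \<omega>)) * indicator B (V \<omega>) \<partial>M)"
  shows "AE \<omega> in M. h (V \<omega>) = real_cond_exp M (vimage_algebra (space M) V borel) W \<omega>"
proof -
  let ?F = "vimage_algebra (space M) V borel"
  have "subalgebra M ?F"
    unfolding subalgebra_def using sets_image_in_sets[OF refl, of V M borel] by simp
  then interpret finite_measure_subalgebra M ?F
    by unfold_locales
  have "(\<lambda>\<omega>. h (V \<omega>)) \<in> borel_measurable ?F"
    using measurable_vimage_algebra1[of V "space M" borel] by measurable
  moreover have "integrable M W" "integrable M (\<lambda>\<omega>. h (V \<omega>))"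
    using W_bounds h_bounds by (auto intro!: integrable_const_bound[where B=1] AE_I2)
  moreover have "(\<integral>\<omega>\<in>A. W \<omega> \<partial>M) = (\<integral>\<omega>\<in>A. h (V \<omega>) \<partial>M)" if "A \<in> sets ?F" for A
  proof -
    obtain B where B[measurable]: "B \<in> sets borel" and A: "A = V -` B \<inter> space M"
      using \<open>A \<in> sets ?F\<close> sets_vimage_algebra2[of V "space M" borel] by auto
    have set_integral: "(\<integral>\<omega>\<in>A. f \<omega> \<partial>M) = enn2real (\<integral>\<^sup>+\<omega>. ennreal (f \<omega>) * indicator B (V \<omega>) \<partial>M)"
      if [measurable]: "f \<in> borel_measurable M" and f: "\<And>\<omega>. \<omega> \<in> space M \<Longrightarrow> 0 \<le> f \<omega>" for f
    proof -
      have "(\<integral>\<omega>\<in>A. f \<omega> \<partial>M) = (\<integral>\<omega>. f \<omega> * indicator B (V \<omega>) \<partial>M)"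
        unfolding set_lebesgue_integral_def A
        by (intro Bochner_Integration.integral_cong) (auto simp: indicator_def)
      also have "\<dots> = enn2real (\<integral>\<^sup>+\<omega>. ennreal (f \<omega> * indicator B (V \<omega>)) \<partial>M)"
        using f by (intro integral_eq_nn_integral) auto
      also have "(\<integral>\<^sup>+\<omega>. ennreal (f \<omega> * indicator B (V \<omega>)) \<partial>M) = (\<integral>\<^sup>+\<omega>. ennreal (f \<omega>) * indicator B (V \<omega>) \<partial>M)"
        using f by (intro nn_integral_cong) (simp add: ennreal_mult'' ennreal_indicator)
      finally show ?thesis .
    qed
    show ?thesis
      using W_bounds h_bounds by (simp add: set_integral eq)
  qed
  ultimately have "AE \<omega> in M. real_cond_exp M ?F W \<omega> = h (V \<omega>)"
    by (intro real_cond_exp_charact)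
  then show ?thesis
    by eventually_elim simp
qed

section \<open>The order statistic of an i.i.d. sample\<close>

lemma AE_PiM_component_neq:
  fixes \<mu> :: "real measure"
  assumes "sigma_finite_measure \<mu>" and sets_eq[measurable_cong]: "sets \<mu> = sets borel"
    and no_atoms: "\<And>x. emeasure \<mu> {x} = 0"
    and "finite I" "i \<in> I" "j \<in> I" "i \<noteq> j"
  shows "AE x in PiM I (\<lambda>_. \<mu>). x i \<noteq> x j"
proof -
  interpret product_sigma_finite "\<lambda>_. \<mu>"
    using assms(1) by (simp add: product_sigma_finite_def)
  obtain J where I: "I = insert j J" "j \<notin> J"
    using mk_disjoint_insert[OF \<open>j \<in> I\<close>] by blast
  have [simp]: "i \<in> J" "finite J"
    using assms(4,5,7) I by auto
  let ?N = "{x \<in> space (PiM (insert j J) (\<lambda>_. \<mu>)). x i = x j}"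
  have [measurable]: "?N \<in> sets (PiM (insert j J) (\<lambda>_. \<mu>))"
    by measurable
  have "emeasure (PiM (insert j J) (\<lambda>_. \<mu>)) ?N = (\<integral>\<^sup>+x. indicator ?N x \<partial>PiM (insert j J) (\<lambda>_. \<mu>))"
    by simp
  also have "\<dots> = (\<integral>\<^sup>+x. (\<integral>\<^sup>+y. indicator ?N (x(j := y)) \<partial>\<mu>) \<partial>PiM J (\<lambda>_. \<mu>))"
    using \<open>finite J\<close> I(2) by (intro product_nn_integral_insert) auto
  also have "\<dots> = (\<integral>\<^sup>+x. emeasure \<mu> {x i} \<partial>PiM J (\<lambda>_. \<mu>))"
  proof (intro nn_integral_cong)
    fix x assume "x \<in> space (PiM J (\<lambda>_. \<mu>))"
    then have "indicator ?N (x(j := y)) = (indicator {x i} y :: ennreal)" for y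
      using \<open>i \<in> J\<close> \<open>i \<noteq> j\<close> I(2) sets_eq_imp_space_eq[OF sets_eq]
      by (auto simp: indicator_def space_PiM PiE_def extensional_def)
    then show "(\<integral>\<^sup>+y. indicator ?N (x(j := y)) \<partial>\<mu>) = emeasure \<mu> {x i}"
      by (simp add: sets_eq)
  qed
  finally have "emeasure (PiM (insert j J) (\<lambda>_. \<mu>)) ?N = 0"
    by (simp add: no_atoms)
  then have "AE x in PiM (insert j J) (\<lambda>_. \<mu>). x i \<noteq> x j"
    by (subst AE_iff_measurable) auto
  then show ?thesis
    unfolding I(1) .
qed

lemma AE_PiM_inj_on:
  fixes \<mu> :: "real measure"
  assumes "sigma_finite_measure \<mu>" "sets \<mu> = sets borel" "\<And>x. emeasure \<mu> {x} = 0"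
    and "finite I" "T \<subseteq> I"
  shows "AE x in PiM I (\<lambda>_. \<mu>). inj_on x T"
proof -
  have "AE x in PiM I (\<lambda>_. \<mu>). \<forall>i\<in>T. \<forall>j\<in>T. i \<noteq> j \<longrightarrow> x i \<noteq> x j"
    using assms finite_subset[OF assms(5,4)]
    by (intro AE_finite_allI AE_impI AE_PiM_component_neq) auto
  then show ?thesis
    by (auto simp: inj_on_def elim!: AE_mp)
qed

locale iid_order_stat =
  fixes \<mu> :: "real measure" and I T :: "nat set" and k :: nat
  assumes prob_space_\<mu>: "prob_space \<mu>" and sets_\<mu>[measurable_cong]: "sets \<mu> = sets borel"
    and no_atoms: "\<And>x. emeasure \<mu> {x} = 0"
    and finite_I: "finite I" and T_subset: "T \<subseteq> I" and k_pos: "1 \<le> k" and k_le: "k \<le> card T"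
begin

abbreviation P :: "(nat \<Rightarrow> real) measure" where
  "P \<equiv> PiM I (\<lambda>_. \<mu>)"

(* The mu-density at t of B |-> E[Phi(X); X in rank_event T j S, X_j in B]; summing over j and S
   gives the mu-density of B |-> E[Phi(X); order_stat T k X in B]. *)
definition rank_density :: "((nat \<Rightarrow> real) \<Rightarrow> ennreal) \<Rightarrow> nat \<Rightarrow> nat set \<Rightarrow> real \<Rightarrow> ennreal" where
  "rank_density \<Phi> j S t =
     (\<integral>\<^sup>+x. \<Phi> (x(j := t)) * indicator (rank_event T j S) (x(j := t)) \<partial>PiM (I - {j}) (\<lambda>_. \<mu>))"

definition stat_density :: "((nat \<Rightarrow> real) \<Rightarrow> ennreal) \<Rightarrow> real \<Rightarrow> ennreal" where
  "stat_density \<Phi> t = (\<Sum>j\<in>T. \<Sum>S\<in>below_sets T k j. rank_density \<Phi> j S t)"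

lemma finite_T: "finite T"
  using finite_I T_subset by (rule finite_subset[rotated])

lemma sigma_finite_\<mu>: "sigma_finite_measure \<mu>"
  using prob_space_\<mu> by (rule prob_space_imp_sigma_finite)

lemma product_sigma_finite_\<mu>: "product_sigma_finite (\<lambda>_. \<mu>)"
  using sigma_finite_\<mu> by (simp add: product_sigma_finite_def)

lemma emeasure_\<mu>_UNIV: "emeasure \<mu> UNIV = 1"
  using prob_space.emeasure_space_1[OF prob_space_\<mu>] sets_eq_imp_space_eq[OF sets_\<mu>] by simp

lemma prob_space_PiM: "prob_space (PiM J (\<lambda>_. \<mu>))"
  using prob_space_\<mu> by (intro prob_space_PiM) auto

lemma measurable_order_stat[measurable]: "order_stat T k \<in> borel_measurable P"
  using finite_T k_pos k_le T_subset by (intro borel_measurable_order_stat[where F="\<lambda>x. x"]) auto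

lemma measurable_upd_pair:
  assumes "j \<in> I"
  shows "(\<lambda>(t, x). x(j := t)) \<in> measurable (borel \<Otimes>\<^sub>M PiM (I - {j}) (\<lambda>_. \<mu>)) P"
proof -
  have "(\<lambda>(t, x). (x, t)) \<in> measurable (borel \<Otimes>\<^sub>M PiM (I - {j}) (\<lambda>_. \<mu>)) (PiM (I - {j}) (\<lambda>_. \<mu>) \<Otimes>\<^sub>M \<mu>)"
    by measurable
  from measurable_comp[OF this measurable_add_dim[of j "I - {j}" "\<lambda>_. \<mu>"]] show ?thesis
    using assms by (simp add: comp_def case_prod_beta' insert_absorb)
qed

lemma measurable_upd:
  "j \<in> I \<Longrightarrow> (\<lambda>x. x(j := t)) \<in> measurable (PiM (I - {j}) (\<lambda>_. \<mu>)) P"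
  using measurable_Pair2[OF measurable_upd_pair, of j t] by simp

lemma measurable_nn_integral_upd:
  assumes "F \<in> borel_measurable P" "j \<in> I"
  shows "(\<lambda>t. \<integral>\<^sup>+x. F (x(j := t)) \<partial>PiM (I - {j}) (\<lambda>_. \<mu>)) \<in> borel_measurable borel"
proof -
  interpret sigma_finite_measure "PiM (I - {j}) (\<lambda>_. \<mu>)"
    using prob_space_PiM by (rule prob_space_imp_sigma_finite)
  show ?thesis
    using measurable_comp[OF measurable_upd_pair[OF assms(2)] assms(1)]
    by (intro borel_measurable_nn_integral) (simp add: comp_def case_prod_beta')
qed

lemma measurable_rank_density[measurable]:
  assumes [measurable]: "\<Phi> \<in> borel_measurable P" and "j \<in> T" "S \<in> below_sets T k j"
  shows "rank_density \<Phi> j S \<in> borel_measurable borel"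
proof -
  have "j \<in> I" "S \<subseteq> I"
    using assms(2,3) T_subset by (auto simp: below_sets_def)
  then have "(\<lambda>x. \<Phi> x * indicator (rank_event T j S) x) \<in> borel_measurable P"
    using T_subset by measurable
  from measurable_nn_integral_upd[OF this \<open>j \<in> I\<close>] show ?thesis
    unfolding rank_density_def[abs_def] .
qed

lemma measurable_stat_density[measurable]:
  "\<Phi> \<in> borel_measurable P \<Longrightarrow> stat_density \<Phi> \<in> borel_measurable borel"
  unfolding stat_density_def[abs_def] by (intro borel_measurable_sum measurable_rank_density)

lemma nn_integral_rank_event:
  assumes [measurable]: "\<Phi> \<in> borel_measurable P" "G \<in> borel_measurable borel"
    and "j \<in> T" "S \<in> below_sets T k j"
  shows "(\<integral>\<^sup>+x. \<Phi> x * G (x j) * indicator (rank_event T j S) x \<partial>P) = (\<integral>\<^sup>+t. G t * rank_density \<Phi> j S t \<partial>\<mu>)"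
proof -
  interpret product_sigma_finite "\<lambda>_. \<mu>"
    by (rule product_sigma_finite_\<mu>)
  have [simp]: "j \<in> I" and "S \<subseteq> I"
    using assms(3,4) T_subset by (auto simp: below_sets_def)
  then have F[measurable]: "(\<lambda>x. \<Phi> x * G (x j) * indicator (rank_event T j S) x) \<in> borel_measurable P"
    using T_subset by measurable
  have "(\<integral>\<^sup>+x. \<Phi> x * G (x j) * indicator (rank_event T j S) x \<partial>P) =
      (\<integral>\<^sup>+x. \<Phi> x * G (x j) * indicator (rank_event T j S) x \<partial>PiM (insert j (I - {j})) (\<lambda>_. \<mu>))"
    by (simp add: insert_absorb)
  also have "\<dots> = (\<integral>\<^sup>+t. (\<integral>\<^sup>+x. \<Phi> (x(j := t)) * G t * indicator (rank_event T j S) (x(j := t))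
        \<partial>PiM (I - {j}) (\<lambda>_. \<mu>)) \<partial>\<mu>)"
    using finite_I F by (subst product_nn_integral_insert_rev) (simp_all add: insert_absorb)
  also have "\<dots> = (\<integral>\<^sup>+t. G t * rank_density \<Phi> j S t \<partial>\<mu>)"
  proof (rule nn_integral_cong)
    fix t
    have "(\<lambda>x. \<Phi> x * indicator (rank_event T j S) x) \<in> borel_measurable P"
      using \<open>S \<subseteq> I\<close> T_subset by measurable
    from measurable_comp[OF measurable_upd[OF \<open>j \<in> I\<close>, of t] this]
    show "(\<integral>\<^sup>+x. \<Phi> (x(j := t)) * G t * indicator (rank_event T j S) (x(j := t)) \<partial>PiM (I - {j}) (\<lambda>_. \<mu>)) =
        G t * rank_density \<Phi> j S t"
      unfolding rank_density_def by (subst nn_integral_cmult[symmetric]) (simp_all add: comp_def mult_ac)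
  qed
  finally show ?thesis .
qed

lemma nn_integral_order_stat:
  assumes [measurable]: "\<Phi> \<in> borel_measurable P" "G \<in> borel_measurable borel"
  shows "(\<integral>\<^sup>+x. \<Phi> x * G (order_stat T k x) \<partial>P) = (\<integral>\<^sup>+t. G t * stat_density \<Phi> t \<partial>\<mu>)"
proof -
  have [measurable]: "(\<lambda>x. \<Phi> x * G (x j) * indicator (rank_event T j S) x) \<in> borel_measurable P"
    if "j \<in> T" "S \<in> below_sets T k j" for j S
  proof -
    have "j \<in> I" "S \<subseteq> I"
      using that T_subset by (auto simp: below_sets_def)
    then show ?thesis
      using T_subset by measurable
  qed
  have "(\<integral>\<^sup>+x. \<Phi> x * G (order_stat T k x) \<partial>P) =
      (\<integral>\<^sup>+x. (\<Sum>j\<in>T. \<Sum>S\<in>below_sets T k j. \<Phi> x * G (x j) * indicator (rank_event T j S) x) \<partial>P)"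
    \<comment> \<open>Almost surely there are no ties, and then exactly one rank event occurs.\<close>
    using AE_PiM_inj_on[OF sigma_finite_\<mu> sets_\<mu> no_atoms finite_I T_subset]
    by (intro nn_integral_cong_AE)
      (auto elim!: AE_mp intro!: order_stat_sum_rank_events[OF finite_T k_pos k_le, where F="\<lambda>z. \<Phi> _ * G z"])
  also have "\<dots> = (\<Sum>j\<in>T. \<Sum>S\<in>below_sets T k j. \<integral>\<^sup>+x. \<Phi> x * G (x j) * indicator (rank_event T j S) x \<partial>P)"
    by (simp add: nn_integral_sum)
  also have "\<dots> = (\<Sum>j\<in>T. \<Sum>S\<in>below_sets T k j. \<integral>\<^sup>+t. G t * rank_density \<Phi> j S t \<partial>\<mu>)"
    by (simp add: nn_integral_rank_event)
  also have "\<dots> = (\<integral>\<^sup>+t. G t * stat_density \<Phi> t \<partial>\<mu>)"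
    unfolding stat_density_def sum_distrib_left by (simp add: nn_integral_sum)
  finally show ?thesis .
qed

definition rank_window :: "nat set \<Rightarrow> real \<Rightarrow> nat \<Rightarrow> real set" where
  "rank_window S t i = (if i \<in> S then {..<t} else if i \<in> T then {t<..} else UNIV)"

definition rank_prob :: "real \<Rightarrow> ennreal" where
  "rank_prob t = emeasure \<mu> {..<t} ^ (k - 1) * emeasure \<mu> {t<..} ^ (card T - k)"

lemma rank_window_measurable: "rank_window S t i \<in> sets borel"
  by (simp add: rank_window_def)

lemma rank_box_measurable: "PiE (I - {j}) (rank_window S t) \<in> sets (PiM (I - {j}) (\<lambda>_. \<mu>))"
  using finite_I by (intro sets_PiM_I_finite) (simp_all add: sets_\<mu> rank_window_measurable)

lemma rank_event_upd_iff:
  assumes "j \<in> T" "S \<in> below_sets T k j" "x \<in> extensional (I - {j})"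
  shows "x(j := t) \<in> rank_event T j S \<longleftrightarrow> x \<in> PiE (I - {j}) (rank_window S t)"
  using assms T_subset by (auto simp: rank_event_def below_sets_def rank_window_def PiE_iff)

lemma rank_density_PiE:
  assumes "j \<in> T" "S \<in> below_sets T k j"
  shows "rank_density \<Phi> j S t =
    (\<integral>\<^sup>+x\<in>PiE (I - {j}) (rank_window S t). \<Phi> (x(j := t)) \<partial>PiM (I - {j}) (\<lambda>_. \<mu>))"
  unfolding rank_density_def using rank_event_upd_iff[OF assms]
  by (intro nn_integral_cong) (simp add: space_PiM PiE_def indicator_def)

lemma rank_density_one:
  assumes "j \<in> T" "S \<in> below_sets T k j"
  shows "rank_density (\<lambda>_. 1) j S t = rank_prob t"
proof -
  interpret product_sigma_finite "\<lambda>_. \<mu>"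
    by (rule product_sigma_finite_\<mu>)
  have S: "S \<subseteq> T - {j}" "card S = k - 1" "finite S"
    using assms(2) finite_T by (auto simp: below_sets_def intro: finite_subset)
  let ?w = "\<lambda>i. emeasure \<mu> (rank_window S t i)"
  have "rank_density (\<lambda>_. 1) j S t = (\<Prod>i\<in>I - {j}. ?w i)"
    using finite_I rank_box_measurable
    by (simp add: rank_density_PiE[OF assms] emeasure_PiM sets_\<mu> rank_window_measurable)
  also have "\<dots> = (\<Prod>i\<in>S \<union> (T - {j} - S). ?w i)"
    using finite_I S(1) T_subset
    by (intro prod.mono_neutral_right) (auto simp: rank_window_def emeasure_\<mu>_UNIV)
  also have "\<dots> = (\<Prod>i\<in>S. emeasure \<mu> {..<t}) * (\<Prod>i\<in>T - {j} - S. emeasure \<mu> {t<..})"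
    using finite_T S(3) by (subst prod.union_disjoint) (auto simp: rank_window_def)
  also have "card (T - {j} - S) = card T - k"
    using S finite_T assms(1) k_pos by (simp add: card_Diff_subset)
  then have "(\<Prod>i\<in>S. emeasure \<mu> {..<t}) * (\<Prod>i\<in>T - {j} - S. emeasure \<mu> {t<..}) = rank_prob t"
    unfolding rank_prob_def using S(2) by simp
  finally show ?thesis .
qed

lemma cond_stoch_le_rank_window:
  assumes "t \<le> t'"
  shows "cond_stoch_le \<mu> (rank_window S t i) (rank_window S t' i)"
proof -
  consider "i \<in> S" | "i \<notin> S" "i \<in> T" | "i \<notin> S" "i \<notin> T"
    by blast
  then show ?thesis
  proof cases
    case 1
    have "cond_stoch_le \<mu> {..<t} ({..<t} \<union> {t..<t'})"
      by (rule cond_stoch_le_Un_left) (auto simp: sets_\<mu>)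
    moreover have "{..<t} \<union> {t..<t'} = {..<t'}"
      using assms by auto
    ultimately show ?thesis
      using 1 by (simp add: rank_window_def)
  next
    case 2
    have "cond_stoch_le \<mu> ({t<..t'} \<union> {t'<..}) {t'<..}"
      by (rule cond_stoch_le_Un_right) (auto simp: sets_\<mu>)
    moreover have "{t<..t'} \<union> {t'<..} = {t<..}"
      using assms by auto
    ultimately show ?thesis
      using 2 by (simp add: rank_window_def)
  qed (simp add: rank_window_def cond_stoch_le_refl)
qed

lemma rank_density_ratio_mono:
  assumes [measurable]: "\<Phi> \<in> borel_measurable P" and mono: "mono_on (extensional I) \<Phi>"
    and j: "j \<in> T" and S: "S \<in> below_sets T k j" and "t \<le> t'"
  shows "rank_density \<Phi> j S t * rank_prob t' \<le> rank_density \<Phi> j S t' * rank_prob t"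
proof -
  have "j \<in> I"
    using j T_subset by auto
  let ?Q = "PiM (I - {j}) (\<lambda>_. \<mu>)" and ?box = "\<lambda>s. PiE (I - {j}) (rank_window S s)"
  define u where "u x = \<Phi> (x(j := t'))" for x
  have upd_ext: "x(j := s) \<in> extensional I" if "x \<in> extensional (I - {j})" for x s
    using that \<open>j \<in> I\<close> by (auto simp: extensional_def)
  have "u \<in> borel_measurable ?Q"
    unfolding u_def using measurable_comp[OF measurable_upd[OF \<open>j \<in> I\<close>] assms(1)] by (simp add: comp_def)
  moreover have "mono_on (extensional (I - {j})) u"
    unfolding u_def by (intro mono_onI mono_onD[OF mono] upd_ext) (auto simp: le_fun_def)
  ultimately have ratio: "(\<integral>\<^sup>+x\<in>?box t. u x \<partial>?Q) * emeasure ?Q (?box t') \<le>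
      (\<integral>\<^sup>+x\<in>?box t'. u x \<partial>?Q) * emeasure ?Q (?box t)"
    using finite_I \<open>t \<le> t'\<close>
    by (intro PiM_cond_stoch_le sigma_finite_\<mu> sets_\<mu> rank_window_measurable cond_stoch_le_rank_window) auto
  have emeasure_box: "emeasure ?Q (?box s) = rank_prob s" for s
    using rank_density_one[OF j S, of s] rank_box_measurable by (simp add: rank_density_PiE[OF j S])
  have "rank_density \<Phi> j S t \<le> (\<integral>\<^sup>+x\<in>?box t. u x \<partial>?Q)"
    unfolding rank_density_PiE[OF j S] u_def using \<open>t \<le> t'\<close>
    by (intro nn_integral_mono mult_right_mono mono_onD[OF mono] upd_ext)
      (auto simp: space_PiM PiE_def le_fun_def)
  then have "rank_density \<Phi> j S t * rank_prob t' \<le> (\<integral>\<^sup>+x\<in>?box t. u x \<partial>?Q) * rank_prob t'"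
    by (rule mult_right_mono) simp
  also have "\<dots> \<le> rank_density \<Phi> j S t' * rank_prob t"
    using ratio by (simp add: emeasure_box rank_density_PiE[OF j S] u_def)
  finally show ?thesis .
qed

lemma stat_density_one: "stat_density (\<lambda>_. 1) t = of_nat (\<Sum>j\<in>T. card (below_sets T k j)) * rank_prob t"
  unfolding stat_density_def by (simp add: rank_density_one sum_distrib_right)

lemma nn_integral_stat_density_one: "(\<integral>\<^sup>+t. stat_density (\<lambda>_. 1) t \<partial>\<mu>) = 1"
  using nn_integral_order_stat[of "\<lambda>_. 1" "\<lambda>_. 1"] prob_space.emeasure_space_1[OF prob_space_PiM, of I]
  by simp

lemma stat_density_one_finite: "stat_density (\<lambda>_. 1) t < \<top>"
proof -
  interpret prob_space \<mu>
    by (rule prob_space_\<mu>)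
  have "rank_prob t \<le> 1"
    unfolding rank_prob_def by (intro mult_le_one power_le_one emeasure_le_1) auto
  then have "rank_prob t < \<top>"
    using ennreal_one_less_top by (rule order.strict_trans1)
  then show ?thesis
    unfolding stat_density_one using of_nat_less_top
    by (auto simp: ennreal_mult_less_top simp del: of_nat_sum)
qed

lemma stat_density_le_one:
  assumes "\<And>x. \<Phi> x \<le> 1"
  shows "stat_density \<Phi> t \<le> stat_density (\<lambda>_. 1) t"
  unfolding stat_density_def rank_density_def
  using assms by (intro sum_mono nn_integral_mono mult_right_mono) auto

lemma stat_density_ratio_mono:
  assumes "\<Phi> \<in> borel_measurable P" "mono_on (extensional I) \<Phi>" "t \<le> t'"
  shows "stat_density \<Phi> t * stat_density (\<lambda>_. 1) t' \<le> stat_density \<Phi> t' * stat_density (\<lambda>_. 1) t"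
proof -
  have "stat_density \<Phi> t * rank_prob t' \<le> stat_density \<Phi> t' * rank_prob t"
    unfolding stat_density_def sum_distrib_right
    using assms by (intro sum_mono rank_density_ratio_mono) auto
  then show ?thesis
    unfolding stat_density_one by (metis (no_types, lifting) mult.left_commute mult_left_mono zero_le)
qed

lemma ex_mono_cond_order_stat:
  fixes g :: "real \<Rightarrow> real"
  assumes [measurable]: "\<Phi> \<in> borel_measurable P" and "\<And>x. \<Phi> x \<le> 1"
    and "mono_on (extensional I) \<Phi>" and "mono g"
  shows "\<exists>h. mono h \<and> (\<forall>s. 0 \<le> h s \<and> h s \<le> 1) \<and> (\<forall>B\<in>sets borel.
    (\<integral>\<^sup>+x. ennreal (h (g (order_stat T k x))) * indicator B (g (order_stat T k x)) \<partial>P) =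
    (\<integral>\<^sup>+x. \<Phi> x * indicator B (g (order_stat T k x)) \<partial>P))"
proof -
  let ?K = "stat_density (\<lambda>_. 1)"
  have "\<exists>r. mono r \<and> (\<forall>t. 0 \<le> r t \<and> r t \<le> 1) \<and> (\<forall>t. stat_density \<Phi> t = ennreal (r t) * ?K t)"
    using assms by (intro mono_ratio_factor stat_density_le_one stat_density_one_finite stat_density_ratio_mono)
  then obtain r where "mono r" and r_bounds: "\<forall>t. 0 \<le> r t \<and> r t \<le> 1"
    and r: "\<forall>t. stat_density \<Phi> t = ennreal (r t) * ?K t"
    by blast
  define \<rho> where "\<rho> = density \<mu> ?K"
  have sets_\<rho>[measurable_cong]: "sets \<rho> = sets borel"
    by (simp add: \<rho>_def sets_\<mu>)
  have density_\<rho>: "(\<integral>\<^sup>+t. F t \<partial>\<rho>) = (\<integral>\<^sup>+t. F t * ?K t \<partial>\<mu>)" if "F \<in> borel_measurable borel" for F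
    unfolding \<rho>_def using that by (subst nn_integral_density) (auto simp: mult.commute)
  have "emeasure \<rho> (space \<rho>) = 1"
    using density_\<rho>[of "\<lambda>_. 1"] sets_eq_imp_space_eq[OF sets_\<rho>] nn_integral_stat_density_one by simp
  then have "finite_measure \<rho>"
    by (intro finite_measureI) simp
  with sets_\<rho> \<open>mono r\<close> r_bounds \<open>mono g\<close> interpret mono_coarsening \<rho> r g
    by (intro mono_coarsening.intro) simp_all
  show ?thesis
  proof (intro exI conjI ballI allI)
    fix B :: "real set" assume [measurable]: "B \<in> sets borel"
    have "(\<integral>\<^sup>+x. ennreal (h (g (order_stat T k x))) * indicator B (g (order_stat T k x)) \<partial>P) =
        (\<integral>\<^sup>+t\<in>g -` B. ennreal (h (g t)) \<partial>\<rho>)"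
      using nn_integral_order_stat[of "\<lambda>_. 1" "\<lambda>t. ennreal (h (g t)) * indicator B (g t)"]
      by (simp add: density_\<rho> indicator_vimage[symmetric])
    also have "\<dots> = (\<integral>\<^sup>+t\<in>g -` B. ennreal (r t) \<partial>\<rho>)"
      by (rule set_nn_integral_h) fact
    also have "\<dots> = (\<integral>\<^sup>+x. \<Phi> x * indicator B (g (order_stat T k x)) \<partial>P)"
      using nn_integral_order_stat[of \<Phi> "\<lambda>t. indicator B (g t)"] r
      by (simp add: density_\<rho> indicator_vimage[symmetric] mult_ac)
    finally show "(\<integral>\<^sup>+x. ennreal (h (g (order_stat T k x))) * indicator B (g (order_stat T k x)) \<partial>P) =
        (\<integral>\<^sup>+x. \<Phi> x * indicator B (g (order_stat T k x)) \<partial>P)" .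
  qed (use mono_h h_nonneg h_le_1 in auto)
qed

end

section \<open>PRDS\<close>

lemma space_vec_space: "space (vec_space n) = extensional {1..n}"
  by (simp add: vec_space_def space_PiM PiE_def)

lemma vec_le_iff_le: "x \<in> extensional {1..n} \<Longrightarrow> y \<in> extensional {1..n} \<Longrightarrow> vec_le n x y \<longleftrightarrow> x \<le> y"
  by (auto simp: vec_le_def le_fun_def extensional_def)

lemma (in prob_space) ex_mono_cond_exp_order_stat:
  fixes g :: "real \<Rightarrow> real" and \<Phi> :: "(nat \<Rightarrow> real) \<Rightarrow> real"
  assumes iid: "iid_order_stat \<mu> {1..n} T k"
    and X_vec: "rvec n X \<in> measurable M (vec_space n)"
    and X_distr: "distr M (vec_space n) (rvec n X) = PiM {1..n} (\<lambda>_. \<mu>)"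
    and \<Phi>_meas: "\<Phi> \<in> borel_measurable (vec_space n)" and \<Phi>_bounds: "\<And>x. 0 \<le> \<Phi> x \<and> \<Phi> x \<le> 1"
    and \<Phi>_mono: "mono_on (extensional {1..n}) \<Phi>" and "mono g"
    and W: "\<And>\<omega>. \<omega> \<in> space M \<Longrightarrow> W \<omega> = \<Phi> (rvec n X \<omega>)"
  defines "V \<equiv> \<lambda>\<omega>. g (order_stat T k (rvec n X \<omega>))"
  shows "\<exists>h. mono h \<and> (AE \<omega> in M. h (V \<omega>) = real_cond_exp M (vimage_algebra (space M) V borel) W \<omega>)"
proof -
  interpret iid_order_stat \<mu> "{1..n}" T k
    by (fact iid)
  have [measurable]: "g \<in> borel_measurable borel"
    using \<open>mono g\<close> by (rule borel_measurable_mono)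
  have meas_P: "borel_measurable P = borel_measurable (vec_space n)"
    unfolding vec_space_def by (intro measurable_cong_sets sets_PiM_cong) (simp_all add: sets_\<mu>)
  have \<Phi>_P[measurable]: "\<Phi> \<in> borel_measurable P"
    using \<Phi>_meas by (simp only: meas_P)
  have "(\<lambda>x. ennreal (\<Phi> x)) \<in> borel_measurable P" "\<And>x. ennreal (\<Phi> x) \<le> 1"
    "mono_on (extensional {1..n}) (\<lambda>x. ennreal (\<Phi> x))"
    using \<Phi>_P \<Phi>_bounds \<Phi>_mono by (auto intro!: mono_onI ennreal_leI dest: mono_onD)
  from ex_mono_cond_order_stat[OF this \<open>mono g\<close>] obtain h
    where "mono h" and h_bounds: "\<forall>s. 0 \<le> h s \<and> h s \<le> 1"
    and h: "\<forall>B\<in>sets borel.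
      (\<integral>\<^sup>+x. ennreal (h (g (order_stat T k x))) * indicator B (g (order_stat T k x)) \<partial>P) =
      (\<integral>\<^sup>+x. ennreal (\<Phi> x) * indicator B (g (order_stat T k x)) \<partial>P)"
    by blast
  have [measurable]: "h \<in> borel_measurable borel"
    using \<open>mono h\<close> by (rule borel_measurable_mono)
  have [measurable]: "V \<in> borel_measurable M"
    unfolding V_def using measurable_comp[OF X_vec measurable_order_stat[unfolded meas_P]]
    by (simp add: comp_def)
  have W_meas: "W \<in> borel_measurable M"
    using measurable_comp[OF X_vec \<Phi>_meas] W by (simp add: comp_def cong: measurable_cong)
  have eq: "(\<integral>\<^sup>+\<omega>. ennreal (W \<omega>) * indicator B (V \<omega>) \<partial>M) = (\<integral>\<^sup>+\<omega>. ennreal (h (V \<omega>)) * indicator B (V \<omega>) \<partial>M)"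
    if [measurable]: "B \<in> sets borel" for B
  proof -
    have distr: "(\<integral>\<^sup>+\<omega>. F (rvec n X \<omega>) \<partial>M) = (\<integral>\<^sup>+x. F x \<partial>P)" if "F \<in> borel_measurable P" for F
    proof -
      have "(\<integral>\<^sup>+x. F x \<partial>P) = (\<integral>\<^sup>+x. F x \<partial>distr M (vec_space n) (rvec n X))"
        by (simp only: X_distr)
      also have "\<dots> = (\<integral>\<^sup>+\<omega>. F (rvec n X \<omega>) \<partial>M)"
        using that[unfolded meas_P] by (intro nn_integral_distr X_vec) simp
      finally show ?thesis ..
    qed
    have "(\<lambda>x. ennreal (\<Phi> x) * indicator B (g (order_stat T k x))) \<in> borel_measurable P"
      "(\<lambda>x. ennreal (h (g (order_stat T k x))) * indicator B (g (order_stat T k x))) \<in> borel_measurable P"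
      by (measurable, measurable)
    note distr = this[THEN distr]
    have "(\<integral>\<^sup>+\<omega>. ennreal (W \<omega>) * indicator B (V \<omega>) \<partial>M) =
        (\<integral>\<^sup>+x. ennreal (\<Phi> x) * indicator B (g (order_stat T k x)) \<partial>P)"
      unfolding V_def distr(1)[symmetric] using W by (auto intro!: nn_integral_cong)
    also have "\<dots> = (\<integral>\<^sup>+\<omega>. ennreal (h (V \<omega>)) * indicator B (V \<omega>) \<partial>M)"
      unfolding V_def distr(2) using h by auto
    finally show ?thesis .
  qed
  have "AE \<omega> in M. h (V \<omega>) = real_cond_exp M (vimage_algebra (space M) V borel) W \<omega>"
    by (rule AE_real_cond_exp_vimage_eq[OF _ W_meas _ _ _ eq])
      (use h_bounds \<Phi>_bounds W in \<open>simp_all\<close>)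
  with \<open>mono h\<close> show ?thesis
    by blast
qed

lemma PRDS_mono_fun_order_stat:
  fixes g :: "real \<Rightarrow> real" and F :: "(nat \<Rightarrow> real) \<Rightarrow> nat \<Rightarrow> real"
  assumes "prob_space M" and iid: "iid_order_stat \<mu> {1..n} T k"
    and X_vec: "rvec n X \<in> measurable M (vec_space n)"
    and X_distr: "distr M (vec_space n) (rvec n X) = PiM {1..n} (\<lambda>_. \<mu>)"
    and F_meas: "F \<in> measurable (vec_space n) (vec_space m)"
    and F_mono: "\<And>x y. x \<in> space (vec_space n) \<Longrightarrow> y \<in> space (vec_space n) \<Longrightarrow> vec_le n x y \<Longrightarrow>
      vec_le m (F x) (F y)"
    and F_1: "\<And>x. F x 1 = g (order_stat T k x)" and "mono g" and "1 \<le> m"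
    and Y: "\<And>\<omega>. rvec m Y \<omega> = F (rvec n X \<omega>)"
  shows "PRDS M m Y {1}"
  unfolding PRDS_def
proof (intro ballI impI)
  fix i D assume "i \<in> {1::nat}" and D_meas: "D \<in> sets (vec_space m)" and "nondecr_set m D"
  define \<Phi> where "\<Phi> x = (indicator D (F x) :: real)" for x
  have "\<Phi> \<in> borel_measurable (vec_space n)"
    unfolding \<Phi>_def[abs_def] using measurable_comp[OF F_meas borel_measurable_indicator[OF D_meas]]
    by (simp add: comp_def)
  moreover have "mono_on (extensional {1..n}) \<Phi>"
  proof (rule mono_onI)
    fix x y :: "nat \<Rightarrow> real" assume "x \<in> extensional {1..n}" "y \<in> extensional {1..n}" "x \<le> y"
    then have "vec_le m (F x) (F y)"
      using F_mono by (simp add: space_vec_space vec_le_iff_le)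
    moreover have "F y \<in> space (vec_space m)"
      using measurable_space[OF F_meas] \<open>y \<in> extensional {1..n}\<close> by (simp add: space_vec_space)
    ultimately show "\<Phi> x \<le> \<Phi> y"
      using \<open>nondecr_set m D\<close> by (auto simp: \<Phi>_def indicator_def nondecr_set_def)
  qed
  moreover have "Y 1 = (\<lambda>\<omega>. g (order_stat T k (rvec n X \<omega>)))"
    using Y F_1 \<open>1 \<le> m\<close> by (metis atLeastAtMost_iff order.refl restrict_apply' rvec_def)
  moreover have "indicator {\<omega>\<in>space M. rvec m Y \<omega> \<in> D} \<omega> = \<Phi> (rvec n X \<omega>)" if "\<omega> \<in> space M" for \<omega>
    using that by (simp add: \<Phi>_def Y indicator_def)
  ultimately show "\<exists>h. mono h \<and> (AE \<omega> in M. h (Y i \<omega>) =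
      real_cond_exp M (vimage_algebra (space M) (Y i) borel) (indicator {\<omega>\<in>space M. rvec m Y \<omega> \<in> D}) \<omega>)"
    using prob_space.ex_mono_cond_exp_order_stat[OF \<open>prob_space M\<close> iid X_vec X_distr] \<open>mono g\<close> \<open>i \<in> {1}\<close>
    by (simp add: \<Phi>_def)
qed

lemma (in prob_space) iid_order_stat_law:
  assumes X_meas: "\<And>i. i \<in> {1..n} \<Longrightarrow> X i \<in> borel_measurable M"
    and X_indep: "indep_vars (\<lambda>_. borel) X {1..n}"
    and X_ident: "\<And>i. i \<in> {1..n} \<Longrightarrow> distr M borel (X i) = distr M borel (X 1)"
    and X_cont: "\<And>i x. i \<in> {1..n} \<Longrightarrow> measure M {\<omega> \<in> space M. X i \<omega> = x} = 0"
    and T: "T \<subseteq> {1..n}" and k: "1 \<le> k" "k \<le> card T"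
  shows "iid_order_stat (distr M borel (X 1)) {1..n} T k"
    and "rvec n X \<in> measurable M (vec_space n)"
    and "distr M (vec_space n) (rvec n X) = PiM {1..n} (\<lambda>_. distr M borel (X 1))"
proof -
  have "T \<noteq> {}"
    using k by auto
  with T have one: "1 \<in> {1..n}"
    by auto
  have "emeasure (distr M borel (X 1)) {x} = 0" for x
  proof -
    have "X 1 -` {x} \<inter> space M = {\<omega> \<in> space M. X 1 \<omega> = x}"
      by auto
    then show ?thesis
      using X_meas[OF one] X_cont[OF one] by (simp add: emeasure_distr emeasure_eq_measure)
  qed
  then show "iid_order_stat (distr M borel (X 1)) {1..n} T k"
    using prob_space_distr[OF X_meas[OF one]] T k by (intro iid_order_stat.intro) simp_all
  show "rvec n X \<in> measurable M (vec_space n)"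
    unfolding rvec_def[abs_def] vec_space_def using X_meas by (rule measurable_restrict)
  have "distr M (PiM {1..n} (\<lambda>_. borel)) (\<lambda>\<omega>. \<lambda>i\<in>{1..n}. X i \<omega>) = PiM {1..n} (\<lambda>i. distr M borel (X i))"
    using indep_vars_iff_distr_eq_PiM'[of "{1..n}" X "\<lambda>_. borel"] one X_meas X_indep by auto
  also have "\<dots> = PiM {1..n} (\<lambda>_. distr M borel (X 1))"
    using X_ident by (rule PiM_cong[OF refl])
  finally show "distr M (vec_space n) (rvec n X) = PiM {1..n} (\<lambda>_. distr M borel (X 1))"
    unfolding vec_space_def rvec_def[abs_def] .
qed

lemma order_stat_map_measurable_mono:
  fixes g :: "real \<Rightarrow> real" and f :: "nat \<Rightarrow> (nat \<Rightarrow> real) \<Rightarrow> real"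
  assumes T: "T \<subseteq> {1..n}" and k: "1 \<le> k" "k \<le> card T" and g_mono: "mono g"
    and f_meas: "\<And>j. j \<in> {2..m} \<Longrightarrow> f j \<in> borel_measurable (vec_space n)"
    and f_mono: "\<And>j. j \<in> {2..m} \<Longrightarrow> nondecr_fun n (f j)"
  defines "F \<equiv> \<lambda>x. \<lambda>j\<in>{1..m}. if j = 1 then g (order_stat T k x) else f j x"
  shows "F \<in> measurable (vec_space n) (vec_space m)"
    and "\<And>x y. x \<in> space (vec_space n) \<Longrightarrow> y \<in> space (vec_space n) \<Longrightarrow> vec_le n x y \<Longrightarrow>
      vec_le m (F x) (F y)"
proof -
  have finite_T: "finite T"
    using T by (rule finite_subset) simp
  have [measurable]: "g \<in> borel_measurable borel"
    using g_mono by (rule borel_measurable_mono)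
  have [measurable]: "order_stat T k \<in> borel_measurable (vec_space n)"
    using finite_T k T unfolding vec_space_def
    by (intro borel_measurable_order_stat[where F="\<lambda>x. x"]) auto
  have "(\<lambda>x. if j = 1 then g (order_stat T k x) else f j x) \<in> borel_measurable (vec_space n)"
    if "j \<in> {1..m}" for j
    using that f_meas by (cases "j = 1") auto
  then show "F \<in> measurable (vec_space n) (vec_space m)"
    unfolding F_def vec_space_def[of m] by (rule measurable_restrict)
  fix x y assume "x \<in> space (vec_space n)" "y \<in> space (vec_space n)" "vec_le n x y"
  have "order_stat T k x \<le> order_stat T k y"
    using \<open>vec_le n x y\<close> T by (intro order_stat_mono finite_T k) (auto simp: vec_le_def)
  moreover have "f j x \<le> f j y" if "j \<in> {2..m}" for j
    using f_mono[OF that] \<open>x \<in> _\<close> \<open>y \<in> _\<close> \<open>vec_le n x y\<close> unfolding nondecr_fun_def by blast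
  ultimately show "vec_le m (F x) (F y)"
    using g_mono by (auto simp: F_def vec_le_def mono_def)
qed

theorem theorem5:
  fixes M :: "'a measure" and X :: "nat \<Rightarrow> 'a \<Rightarrow> real" and n :: nat
    and T :: "nat set" and k :: nat and g :: "real \<Rightarrow> real"
    and f :: "nat \<Rightarrow> (nat \<Rightarrow> real) \<Rightarrow> real" and m :: nat
    and Y :: "nat \<Rightarrow> 'a \<Rightarrow> real"
  assumes "prob_space M"
    and X_meas: "\<And>i. i \<in> {1..n} \<Longrightarrow> X i \<in> borel_measurable M"
    and X_indep: "prob_space.indep_vars M (\<lambda>_. borel) X {1..n}"
    and X_ident: "\<And>i. i \<in> {1..n} \<Longrightarrow> distr M borel (X i) = distr M borel (X 1)"
    and X_cont: "\<And>i x. i \<in> {1..n} \<Longrightarrow> measure M {\<omega> \<in> space M. X i \<omega> = x} = 0"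
    and m: "1 \<le> m"
    and T: "T \<subseteq> {1..n}"
    and k: "1 \<le> k" "k \<le> card T"
    and g_mono: "mono g"
    and Y1: "\<And>\<omega>. Y 1 \<omega> = g (order_stat T k (\<lambda>i. X i \<omega>))"
    and f_meas: "\<And>j. j \<in> {2..m} \<Longrightarrow> f j \<in> borel_measurable (vec_space n)"
    and f_mono: "\<And>j. j \<in> {2..m} \<Longrightarrow> nondecr_fun n (f j)"
    and Yj: "\<And>j \<omega>. j \<in> {2..m} \<Longrightarrow> Y j \<omega> = f j (rvec n X \<omega>)"
  shows "PRDS M m Y {1}"
proof -
  interpret prob_space M
    by fact
  note law = iid_order_stat_law[OF X_meas X_indep X_ident X_cont T k]
  define F where "F \<equiv> \<lambda>x. \<lambda>j\<in>{1..m}. if j = 1 then g (order_stat T k x) else f j x"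
  have F: "F \<in> measurable (vec_space n) (vec_space m)"
    "\<And>x y. x \<in> space (vec_space n) \<Longrightarrow> y \<in> space (vec_space n) \<Longrightarrow> vec_le n x y \<Longrightarrow>
      vec_le m (F x) (F y)"
    using order_stat_map_measurable_mono[of T n k g m f] T k g_mono f_meas f_mono unfolding F_def
    by blast+
  have Y: "rvec m Y \<omega> = F (rvec n X \<omega>)" for \<omega>
    unfolding rvec_def[of m Y] F_def
  proof (intro restrict_ext)
    fix j assume "j \<in> {1..m}"
    have "order_stat T k (\<lambda>i. X i \<omega>) = order_stat T k (rvec n X \<omega>)"
      using T by (intro order_stat_cong) (auto simp: rvec_def)
    then show "Y j \<omega> = (if j = 1 then g (order_stat T k (rvec n X \<omega>)) else f j (rvec n X \<omega>))"
      using \<open>j \<in> {1..m}\<close> Y1 Yj by auto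
  qed
  have "F x 1 = g (order_stat T k x)" for x
    using m unfolding F_def by simp
  from PRDS_mono_fun_order_stat[OF \<open>prob_space M\<close> law F this g_mono m Y] show ?thesis .
qed

end
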